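(* Let $r\ge1$ and $\alpha,\beta,\gamma^1,\dots,\gamma^r\in\mathrm{ord}$. 1. If $\alpha\le\beta$ and $\beta<\alpha,\gamma^1,\dots,\gamma^r$, then $\beta<\gamma^1,\dots,\gamma^r$. 2. If $\beta<\alpha$ and $\alpha\le\beta,\gamma^1,\dots,\gamma^r$, then $\alpha\le\gamma^1,\dots,\gamma^r$.
   Context: Work constructively. Let $\mathfrak F$ be a set of index sets containing $\mathbb N$ and each $\mathbb N_k=\{n\in\mathbb N:n<k\}$ ($k\ge0$), closed (up to isomorphism) under finitely enumerated subsets, sets of finitely enumerated subsets, and disjoint unions indexed by elements of $\mathfrak F$. A finitely enumerated subset of $A$ is one given by a map $\mathbb N_k\to A$; write $F\subseteq_f I$. The set $\mathrm{ord}$ is inductively generated by $\underline 0$ and, for every family $(\alpha_i)_{i\in I}$ with $I\in\mathfrak F$, $\alpha_i\in\mathrm{ord}$, an element $\mathrm S(\alpha_i)_{i\in I}$; for such $\alpha$, $I_\alpha=I$ and $\alpha_i$ are its definitional subordinals; $I_{\underline 0}=\emptyset$. For a finite list $F$ in $I_\alpha$, $\alpha_F$ is the list of the $\alpha_i$, $i\in F$. Relations between an element and a nonempty finite list, by simultaneous induction: $\alpha\le\beta^1,\dots,\beta^m$ means $\alpha_i<\beta^1,\dots,\beta^m$ for all $i\in I_\alpha$; $\alpha<\beta^1,\dots,\beta^m$ means there exist $F_1\subseteq_f I_{\beta^1},\dots,F_m\subseteq_f I_{\beta^m}$, not all empty, with $\alpha\le\beta^1_{F_1},\dots,\beta^m_{F_m}$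 (concatenated list); $\alpha\le\beta$, $\alpha<\beta$ are the case $m=1$. *)

theory Defs
  imports Main "HOL-Library.Equipollence"
begin

text \<open>Tree ordinals with branching over index sets taken from a type 'i.
  Sup I f stands for S(f i)_{i in I}; values of f outside I are
  normalised to Zero in the carrier ord_of below.\<close>

datatype 'i ord = Zero | Sup "'i set" "'i \<Rightarrow> 'i ord"

fun idx :: "'i ord \<Rightarrow> 'i set" where
  "idx Zero = {}"
| "idx (Sup I f) = I"

fun sub :: "'i ord \<Rightarrow> 'i \<Rightarrow> 'i ord" where
  "sub Zero i = Zero"
| "sub (Sup I f) i = f i"

text \<open>Standing assumptions on the collection of index sets (up to equipollence).
  A finitely enumerated subset of I is a list over I (a map N_k -> I).\<close>

definition index_family :: "'i set set \<Rightarrow> bool" where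
  "index_family FF \<longleftrightarrow>
     (\<exists>I\<in>FF. I \<approx> (UNIV :: nat set))
   \<and> (\<forall>k::nat. \<exists>I\<in>FF. I \<approx> {n::nat. n < k})
   \<and> (\<forall>I\<in>FF. \<forall>xs. set xs \<subseteq> I \<longrightarrow> (\<exists>J\<in>FF. J \<approx> set xs))
   \<and> (\<forall>I\<in>FF. \<exists>J\<in>FF. J \<approx> {xs. set xs \<subseteq> I})
   \<and> (\<forall>I\<in>FF. \<forall>Js. (\<forall>i\<in>I. Js i \<in> FF) \<longrightarrow> (\<exists>K\<in>FF. K \<approx> Sigma I Js))"

inductive_set ord_of :: "'i set set \<Rightarrow> 'i ord set" for FF where
  zero: "Zero \<in> ord_of FF"
| sup: "I \<in> FF \<Longrightarrow> (\<forall>i\<in>I. f i \<in> ord_of FF) \<Longrightarrow> (\<forall>i. i \<notin> I \<longrightarrow> f i = Zero)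
        \<Longrightarrow> Sup I f \<in> ord_of FF"

definition sel :: "'i ord list \<Rightarrow> 'i list list \<Rightarrow> 'i ord list" where
  "sel bs Fs = concat (map (\<lambda>(b, F). map (sub b) F) (zip bs Fs))"

inductive ole :: "'i ord \<Rightarrow> 'i ord list \<Rightarrow> bool"
  and olt :: "'i ord \<Rightarrow> 'i ord list \<Rightarrow> bool" where
  ole_intro: "(\<forall>i\<in>idx a. olt (sub a i) bs) \<Longrightarrow> ole a bs"
| olt_intro: "length Fs = length bs \<Longrightarrow> (\<forall>j<length bs. set (Fs ! j) \<subseteq> idx (bs ! j))
        \<Longrightarrow> (\<exists>j<length bs. Fs ! j \<noteq> []) \<Longrightarrow> ole a (sel bs Fs) \<Longrightarrow> olt a bs"

end

theory Submission
  imports Defs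
begin

text \<open>Binary relations \<open>\<alpha> \<le> \<beta>\<close>, \<open>\<alpha> < \<beta>\<close>, defined like the list relations but with a
  single subordinal \<open>\<beta>\<^sub>j\<close> in place of a finite list \<open>\<beta>\<^sub>F\<close>, are transitive, \<open><\<close> is
  irreflexive, and \<open>\<alpha> \<le> \<beta> \<or> \<beta> < \<alpha>\<close> (classically). So every nonempty list has a
  \<open>\<le>\<close>-maximum, and the list relations collapse to the binary ones:
  \<open>\<alpha> \<le> \<beta>\<^sup>1,\<dots>,\<beta>\<^sup>m\<close> iff \<open>I\<^sub>\<alpha> = \<emptyset>\<close> or \<open>\<alpha> \<le> \<beta>\<^sup>j\<close> for some \<open>j\<close>, and
  \<open>\<alpha> < \<beta>\<^sup>1,\<dots>,\<beta>\<^sup>m\<close> iff \<open>\<alpha> < \<beta>\<^sup>j\<close> for some \<open>j\<close>.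
  Both claims then reduce to the impossibility of \<open>\<beta> < \<alpha> \<le> \<beta>\<close>, together with
  \<open>I\<^sub>\<alpha> \<noteq> \<emptyset>\<close> whenever \<open>\<beta> < \<alpha>\<close>.\<close>

lemma ord_sub_induct:
  assumes "\<And>x. (\<And>i. i \<in> idx x \<Longrightarrow> P (sub x i)) \<Longrightarrow> P x"
  shows "P x"
proof (induction x)
  case Zero
  then show ?case using assms[of Zero] by simp
next
  case (Sup I f)
  then show ?case using assms[of "Sup I f"] by simp
qed

inductive ord_leq :: "'i ord \<Rightarrow> 'i ord \<Rightarrow> bool"
  and ord_less :: "'i ord \<Rightarrow> 'i ord \<Rightarrow> bool" where
  ord_leqI: "(\<And>i. i \<in> idx x \<Longrightarrow> ord_less (sub x i) y) \<Longrightarrow> ord_leq x y"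
| ord_lessI: "j \<in> idx y \<Longrightarrow> ord_leq x (sub y j) \<Longrightarrow> ord_less x y"

lemma ord_leq_iff: "ord_leq x y \<longleftrightarrow> (\<forall>i\<in>idx x. ord_less (sub x i) y)"
  by (auto elim: ord_leq.cases intro: ord_leqI)

lemma ord_less_iff: "ord_less x y \<longleftrightarrow> (\<exists>j\<in>idx y. ord_leq x (sub y j))"
  by (auto elim: ord_less.cases intro: ord_lessI)

lemma ord_less_leq_trans_and_leq_trans:
  "(\<forall>x z. ord_less x y \<longrightarrow> ord_leq y z \<longrightarrow> ord_less x z)
   \<and> (\<forall>x z. ord_leq x y \<longrightarrow> ord_leq y z \<longrightarrow> ord_leq x z)"
proof (induction y rule: ord_sub_induct)
  case (1 y)
  have less_leq: "ord_less x z" if "ord_less x y" "ord_leq y z" for x z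
  proof -
    obtain j where j: "j \<in> idx y" "ord_leq x (sub y j)"
      using \<open>ord_less x y\<close> by (auto simp: ord_less_iff)
    then have "ord_less (sub y j) z" using \<open>ord_leq y z\<close> by (auto simp: ord_leq_iff)
    then obtain k where k: "k \<in> idx z" "ord_leq (sub y j) (sub z k)"
      by (auto simp: ord_less_iff)
    then have "ord_leq x (sub z k)" using 1 j by blast
    with k(1) show ?thesis by (rule ord_lessI)
  qed
  moreover have "ord_leq x z" if "ord_leq x y" "ord_leq y z" for x z
    using that less_leq by (auto simp: ord_leq_iff)
  ultimately show ?case by blast
qed

lemma ord_less_leq_trans: "ord_less x y \<Longrightarrow> ord_leq y z \<Longrightarrow> ord_less x z"
  using ord_less_leq_trans_and_leq_trans by blast

lemma ord_leq_trans: "ord_leq x y \<Longrightarrow> ord_leq y z \<Longrightarrow> ord_leq x z"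
  using ord_less_leq_trans_and_leq_trans by blast

lemma ord_less_irrefl: "\<not> ord_less x x"
proof (induction x rule: ord_sub_induct)
  case (1 x)
  show ?case
  proof
    assume "ord_less x x"
    then obtain j where "j \<in> idx x" "ord_leq x (sub x j)"
      by (auto simp: ord_less_iff)
    then have "ord_less (sub x j) (sub x j)" by (auto simp: ord_leq_iff)
    with 1 \<open>j \<in> idx x\<close> show False by blast
  qed
qed

lemma ord_less_not_leq: "ord_less x y \<Longrightarrow> \<not> ord_leq y x"
  using ord_less_leq_trans ord_less_irrefl by blast

lemma ord_less_imp_leq: "ord_less x y \<Longrightarrow> ord_leq x y"
proof (induction x arbitrary: y rule: ord_sub_induct)
  case (1 x)
  then obtain j where j: "j \<in> idx y" "ord_leq x (sub y j)"
    by (auto simp: ord_less_iff)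
  show ?case
  proof (rule ord_leqI)
    fix i assume i: "i \<in> idx x"
    then have "ord_leq (sub x i) (sub y j)" using 1 j by (auto simp: ord_leq_iff)
    with j(1) show "ord_less (sub x i) y" by (rule ord_lessI)
  qed
qed

lemma ord_leq_or_less: "ord_leq x y \<or> ord_less y x"
proof (induction x arbitrary: y rule: ord_sub_induct)
  case (1 x)
  show ?case
  proof (cases "ord_leq x y")
    case False
    then obtain i where i: "i \<in> idx x" "\<not> ord_less (sub x i) y"
      by (auto simp: ord_leq_iff)
    have "ord_leq y (sub x i)"
    proof (rule ord_leqI)
      fix j assume "j \<in> idx y"
      then have "\<not> ord_leq (sub x i) (sub y j)" using i(2) ord_lessI by metis
      then show "ord_less (sub y j) (sub x i)" using 1 i(1) by blast
    qed
    with i(1) have "ord_less y x" by (rule ord_lessI)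
    then show ?thesis ..
  qed simp
qed

lemma ord_leq_refl: "ord_leq x x"
  using ord_leq_or_less[of x x] ord_less_imp_leq by blast

lemma ord_leq_total: "ord_leq x y \<or> ord_leq y x"
  using ord_leq_or_less ord_less_imp_leq by blast

lemma ord_leq_max_exists: "bs \<noteq> [] \<Longrightarrow> \<exists>m\<in>set bs. \<forall>b\<in>set bs. ord_leq b m"
proof (induction bs rule: list_nonempty_induct)
  case (single x)
  then show ?case using ord_leq_refl by simp
next
  case (cons x xs)
  then obtain m where m: "m \<in> set xs" "\<forall>b\<in>set xs. ord_leq b m" by blast
  show ?case
  proof (cases "ord_leq x m")
    case True
    with m show ?thesis by auto
  next
    case False
    then have "ord_leq m x" using ord_leq_total by blast
    then have "\<forall>b\<in>set (x # xs). ord_leq b x"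
      using m(2) by (auto intro: ord_leq_refl ord_leq_trans)
    then show ?thesis by auto
  qed
qed

lemma in_set_sel_iff:
  assumes "length Fs = length bs"
  shows "d \<in> set (sel bs Fs) \<longleftrightarrow> (\<exists>k<length bs. \<exists>i\<in>set (Fs ! k). d = sub (bs ! k) i)"
  using assms unfolding sel_def by (force simp: set_zip)

lemma ole_olt_imp_ord_leq_less:
  fixes x x' :: "'i ord"
  shows "ole x bs \<Longrightarrow> idx x = {} \<or> (\<exists>b\<in>set bs. ord_leq x b)"
  "olt x' bs' \<Longrightarrow> \<exists>b\<in>set bs'. ord_less x' b"
proof (induction x bs and x' bs' rule: ole_olt.inducts)
  case (ole_intro x bs)
  show ?case
  proof (cases "idx x = {}")
    case False
    then have "bs \<noteq> []" using ole_intro by auto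
    then obtain m where m: "m \<in> set bs" "\<forall>b\<in>set bs. ord_leq b m"
      using ord_leq_max_exists by blast
    have "ord_less (sub x i) m" if "i \<in> idx x" for i
      using ole_intro that m(2) ord_less_leq_trans by blast
    then have "ord_leq x m" by (rule ord_leqI)
    with m(1) show ?thesis by blast
  qed simp
next
  case (olt_intro Fs bs x)
  obtain d where d: "d \<in> set (sel bs Fs)" "ord_leq x d"
  proof (cases "idx x = {}")
    case True
    obtain j i where "j < length bs" "i \<in> set (Fs ! j)"
      using olt_intro(3) by (metis list.set_sel(1))
    then have "sub (bs ! j) i \<in> set (sel bs Fs)" using in_set_sel_iff olt_intro(1) by blast
    with True show ?thesis using that by (auto simp: ord_leq_iff)
  next
    case False
    with olt_intro(5) show ?thesis using that by blast
  qed
  then obtain k i where k: "k < length bs" "i \<in> set (Fs ! k)" "d = sub (bs ! k) i"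
    using olt_intro(1) by (auto simp: in_set_sel_iff)
  then have "i \<in> idx (bs ! k)" using olt_intro(2) by blast
  moreover have "ord_leq x (sub (bs ! k) i)" using d(2) k(3) by simp
  ultimately have "ord_less x (bs ! k)" by (rule ord_lessI)
  with \<open>k < length bs\<close> show ?case using nth_mem by blast
qed

lemma ord_leq_less_imp_ole_olt:
  fixes x x' :: "'i ord"
  shows "ord_leq x y \<Longrightarrow> y \<in> set bs \<Longrightarrow> ole x bs"
  "ord_less x' y' \<Longrightarrow> y' \<in> set bs' \<Longrightarrow> olt x' bs'"
proof (induction x y and x' y' arbitrary: bs and bs' rule: ord_leq_ord_less.inducts)
  case (ord_leqI x y bs)
  then show ?case by (auto intro: ole_intro)
next
  case (ord_lessI j y x bs)
  define Fs where "Fs = map (\<lambda>c. if c = y then [j] else []) bs"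
  obtain k where k: "k < length bs" "bs ! k = y"
    using ord_lessI.prems by (meson in_set_conv_nth)
  have len: "length Fs = length bs" unfolding Fs_def by simp
  have Fk: "Fs ! k = [j]" unfolding Fs_def using k by simp
  have "sub y j \<in> set (sel bs Fs)"
    using in_set_sel_iff[OF len] k Fk by fastforce
  have "\<forall>k'<length bs. set (Fs ! k') \<subseteq> idx (bs ! k')"
    unfolding Fs_def using ord_lessI.hyps(1) by auto
  moreover have "\<exists>k'<length bs. Fs ! k' \<noteq> []" using k Fk by auto
  moreover have "ole x (sel bs Fs)" using ord_lessI.IH \<open>sub y j \<in> set (sel bs Fs)\<close> by blast
  ultimately show ?case by (rule olt_intro[OF len])
qed

lemma ole_iff: "ole x bs \<longleftrightarrow> idx x = {} \<or> (\<exists>b\<in>set bs. ord_leq x b)"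
  using ole_olt_imp_ord_leq_less(1) ord_leq_less_imp_ole_olt(1) by (auto intro: ole_intro)

lemma olt_iff: "olt x bs \<longleftrightarrow> (\<exists>b\<in>set bs. ord_less x b)"
  using ole_olt_imp_ord_leq_less(2) ord_leq_less_imp_ole_olt(2) by blast

theorem lemma4p12:
  fixes FF :: "'i set set" and a b :: "'i ord" and gs :: "'i ord list"
  assumes "index_family FF"
    and "a \<in> ord_of FF" and "b \<in> ord_of FF"
    and "gs \<noteq> []" and "set gs \<subseteq> ord_of FF"
  shows "(ole a [b] \<and> olt b (a # gs) \<longrightarrow> olt b gs)
       \<and> (olt b [a] \<and> ole a (b # gs) \<longrightarrow> ole a gs)"
proof (intro conjI impI; elim conjE)
  assume "ole a [b]" "olt b (a # gs)"
  moreover have "idx a \<noteq> {}" if "ord_less b a"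
    using that by (auto simp: ord_less_iff)
  ultimately show "olt b gs"
    using ord_less_not_leq by (auto simp: ole_iff olt_iff)
next
  assume "olt b [a]" "ole a (b # gs)"
  then show "ole a gs"
    using ord_less_not_leq by (auto simp: ole_iff olt_iff)
qed

end
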